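(* Let $p$ be a prime, $k$ a positive integer, and $n=p^k$. Then \[\operatorname{disc}(\mathcal A_n)\ge\frac14\,p^{\frac{k-\lfloor k/3\rfloor}{2}}.\]
   Context: An arithmetic progression in $\mathbb{Z}_n$ is a set $\{a+kd: 0\le k<l\}$ with $a,d\in\mathbb{Z}_n$ and $l$ an integer with $0\le l\le n/\gcd(n,d)$ (with $\gcd(0,n)=n$); $\mathcal A_n$ is the family of all of them. For $\chi:\mathbb{Z}_n\to\{1,-1\}$, $\chi(A)=\sum_{x\in A}\chi(x)$ and $\operatorname{disc}(\mathcal A_n)=\min_{\chi:\mathbb{Z}_n\to\{1,-1\}}\max_{A\in\mathcal A_n}|\chi(A)|$. *)

theory Defs
  imports Complex_Main "HOL-Library.FuncSet" "HOL-Computational_Algebra.Primes"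
begin

text \<open>Z_n is represented by the residues {0..<n}, with arithmetic mod n.
  An arithmetic progression {a + k d : 0 <= k < l} with a, d in Z_n and
  0 <= l <= n / gcd(n,d) (note gcd 0 n = n).\<close>

definition APs :: "nat \<Rightarrow> nat set set" where
  "APs n = {{(a + k * d) mod n | k. k < l} | a d l.
              a < n \<and> d < n \<and> l \<le> n div gcd n d}"

definition disc_AP :: "nat \<Rightarrow> int" where
  "disc_AP n = Min {Max {\<bar>\<Sum>x\<in>A. \<chi> x\<bar> | A. A \<in> APs n} | \<chi>.
                       \<chi> \<in> {0..<n} \<rightarrow>\<^sub>E {1, -1}}"

end

theory Submission
  imports Defs "HOL-Number_Theory.Cong"
begin

(* Fix a colouring f of Z_n, n = p^k, all of whose progressions have discrepancy at most D, and
   put l = p^m q with 1 <= q < p. The energy of the progressions of length l with unit difference,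
   sum over a and over units d of (sum_{i<l} f(a + i d))^2, is at most n phi(n) D^2. Expanding the
   square writes it through the autocorrelation C of f; since sum_{d unit} C(t d) only depends on
   the p-adic valuation of t, the energy becomes an explicit combination of the sums
   R_v = sum_{p^v | t} C(t). Now R_v is the sum of the squared sums of f over the cosets of
   p^v Z_n, which are progressions, so R_m <= p^m D^2; Cauchy-Schwarz over cosets gives
   R_v <= p R_{v+1}, hence R_{m+1} <= p^(k-m-1) n; and R_0 >= 0. Comparing the two sides yields
   p^(m+1) <= 16 D^2 whenever 3m + 1 <= 2k, and m + 1 = k - floor(k/3), q = floor(p/2) give
   the theorem. *)

lemma sum_lessThan_mult_split:
  fixes a b :: nat
  shows "(\<Sum>z<a*b. g z) = (\<Sum>y<b. \<Sum>x<a. g (x + a*y))"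
proof (induction b)
  case 0 then show ?case by simp
next
  case (Suc b)
  have split: "{..<a * Suc b} = {..<a*b} \<union> {a*b..<a*b+a}" by auto
  have "(\<Sum>z<a*Suc b. g z) = (\<Sum>z<a*b. g z) + (\<Sum>z\<in>{a*b..<a*b+a}. g z)"
    unfolding split by (rule sum.union_disjoint) auto
  also have "(\<Sum>z\<in>{a*b..<a*b+a}. g z) = (\<Sum>x<a. g (x + a*b))"
    using sum.shift_bounds_nat_ivl[of g 0 "a*b" a] by (simp add: atLeast0LessThan add.commute)
  finally show ?case using Suc by simp
qed

lemma sum_lessThan_shift_periodic:
  fixes g :: "nat \<Rightarrow> 'a::cancel_comm_monoid_add"
  assumes "\<And>x. g (x + M) = g x"
  shows "(\<Sum>y<M. g (y + s)) = (\<Sum>y<M. g y)"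
proof (induction s)
  case 0 then show ?case by simp
next
  case (Suc s)
  have "g s + (\<Sum>y<M. g (Suc y + s)) = (\<Sum>y<Suc M. g (y + s))"
    by (subst sum.lessThan_Suc_shift) simp
  also have "\<dots> = g s + (\<Sum>y<M. g (y + s))"
    using assms[of s] by (simp add: add.commute)
  finally show ?case using Suc by simp
qed

lemma square_sum_le_card_sum_squares:
  fixes x :: "'b \<Rightarrow> 'a::linordered_idom"
  shows "(\<Sum>r\<in>A. x r)^2 \<le> of_nat (card A) * (\<Sum>r\<in>A. (x r)^2)"
proof -
  have "0 \<le> (\<Sum>i\<in>A. \<Sum>j\<in>A. (x i - x j)^2)" by (intro sum_nonneg) auto
  also have "\<dots> = (\<Sum>i\<in>A. \<Sum>j\<in>A. (x i)^2 + (x j)^2 - 2 * (x i * x j))"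
    by (intro sum.cong refl) (simp add: power2_eq_square algebra_simps)
  also have "\<dots> = 2 * (of_nat (card A) * (\<Sum>r\<in>A. (x r)^2)) - 2 * (\<Sum>r\<in>A. x r)^2"
    by (simp add: sum.distrib sum_subtractf sum_distrib_left sum_distrib_right
          power2_eq_square sum_product algebra_simps)
  finally show ?thesis by simp
qed

lemma sum_mult_mod_reindex:
  fixes n u :: nat
  assumes "coprime u n" "finite S" "S \<subseteq> {..<n}" "(\<lambda>t. (u*t) mod n) ` S \<subseteq> S"
  shows "(\<Sum>t\<in>S. g ((u*t) mod n)) = (\<Sum>t\<in>S. g t)"
proof -
  have inj: "inj_on (\<lambda>t. (u*t) mod n) S"
  proof
    fix x y assume "x \<in> S" "y \<in> S" "(u*x) mod n = (u*y) mod n"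
    then have "x mod n = y mod n"
      using cong_mult_lcancel_nat[OF assms(1)] by (simp add: cong_def)
    moreover have "x < n" "y < n" using \<open>x \<in> S\<close> \<open>y \<in> S\<close> assms(3) by auto
    ultimately show "x = y" by simp
  qed
  have "(\<Sum>t\<in>S. g ((u*t) mod n)) = (\<Sum>t\<in>(\<lambda>t. (u*t) mod n) ` S. g t)"
    by (simp add: sum.reindex[OF inj])
  also have "(\<lambda>t. (u*t) mod n) ` S = S" using endo_inj_surj[OF assms(2,4) inj] .
  finally show ?thesis .
qed

definition nat_dist :: "nat \<Rightarrow> nat \<Rightarrow> nat" where
  "nat_dist i j = (if i \<le> j then j - i else i - j)"

lemma dvd_nat_dist_iff: "M dvd nat_dist i j \<longleftrightarrow> i mod M = j mod M"
proof (cases "i \<le> j")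
  case True then show ?thesis using mod_eq_dvd_iff_nat[of i j M] by (simp add: nat_dist_def eq_commute)
next
  case False then show ?thesis using mod_eq_dvd_iff_nat[of j i M] by (simp add: nat_dist_def)
qed

lemma nat_dist_eq_0_iff: "nat_dist i j = 0 \<longleftrightarrow> i = j"
  by (auto simp: nat_dist_def)

definition count_dvd_pairs :: "nat \<Rightarrow> nat \<Rightarrow> int" where
  "count_dvd_pairs M l = (\<Sum>i<l. \<Sum>j<l. of_bool (M dvd nat_dist i j))"

lemma count_dvd_pairs_mult:
  assumes "0 < M"
  shows "count_dvd_pairs M (M*Q) = int (M*Q) * int Q"
proof -
  have "(\<Sum>j<M*Q. of_bool (M dvd nat_dist i j) :: int) = int Q" for i
  proof -
    have "(\<Sum>j<M*Q. of_bool (M dvd nat_dist i j) :: int)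
        = (\<Sum>y<Q. \<Sum>x<M. of_bool ((x + M*y) mod M = i mod M))"
      unfolding dvd_nat_dist_iff eq_commute[of "i mod M"] by (rule sum_lessThan_mult_split)
    also have "\<dots> = (\<Sum>y<Q. \<Sum>x<M. if x = i mod M then 1 else 0)"
      by (intro sum.cong refl) simp
    also have "\<dots> = int Q" using assms by (simp add: sum.delta')
    finally show ?thesis .
  qed
  then show ?thesis by (simp add: count_dvd_pairs_def)
qed

lemma count_dvd_pairs_le:
  assumes "l \<le> M"
  shows "count_dvd_pairs M l = int l"
proof -
  have "count_dvd_pairs M l = (\<Sum>i<l. \<Sum>j<l. if j = i then 1 else 0)"
    unfolding count_dvd_pairs_def
  proof (intro sum.cong refl)
    fix i j assume "i \<in> {..<l}" "j \<in> {..<l}"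
    then have "nat_dist i j < M" using assms by (auto simp: nat_dist_def)
    then have "M dvd nat_dist i j \<longleftrightarrow> nat_dist i j = 0"
      by (metis dvd_0_right dvd_imp_le leD not_gr0)
    then have "M dvd nat_dist i j \<longleftrightarrow> i = j" by (simp add: nat_dist_eq_0_iff)
    then show "(of_bool (M dvd nat_dist i j) :: int) = (if j = i then 1 else 0)" by auto
  qed
  also have "\<dots> = int l" by (simp add: sum.delta)
  finally show ?thesis .
qed

lemma inj_on_ap_mod:
  fixes n d a L :: nat
  assumes "0 < n" "L \<le> n div gcd n d"
  shows "inj_on (\<lambda>i. (a + i*d) mod n) {..<L}"
proof -
  have le_imp_eq: "x = y" if xy: "x \<le> y" "y < L" and eq: "(a + x*d) mod n = (a + y*d) mod n"
    for x y
  proof -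
    define g where "g = gcd n d"
    have "n dvd (y - x) * d"
      using eq xy mod_eq_dvd_iff_nat[of "a + x*d" "a + y*d" n] by (simp add: diff_mult_distrib)
    moreover have "n = g * (n div g)" "d = g * (d div g)" by (simp_all add: g_def)
    ultimately have "g * (n div g) dvd g * ((y - x) * (d div g))"
      by (metis mult.left_commute)
    moreover have "0 < g" using assms(1) by (simp add: g_def)
    ultimately have "n div g dvd (y - x) * (d div g)" by simp
    moreover have "coprime (n div g) (d div g)"
      using assms(1) unfolding g_def by (intro div_gcd_coprime) simp
    ultimately have "n div g dvd y - x" using coprime_dvd_mult_left_iff by blast
    moreover have "y - x < n div g" using xy assms(2) by (simp add: g_def)
    ultimately have "y - x = 0" by (metis dvd_imp_le leD not_gr0)
    then show "x = y" using xy by simp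
  qed
  show ?thesis
  proof (rule inj_onI)
    fix x y assume "x \<in> {..<L}" "y \<in> {..<L}" and eq: "(a + x*d) mod n = (a + y*d) mod n"
    show "x = y"
    proof (cases "x \<le> y")
      case True then show ?thesis using le_imp_eq \<open>y \<in> {..<L}\<close> eq by simp
    next
      case False then show ?thesis using le_imp_eq[of y x] \<open>x \<in> {..<L}\<close> eq by simp
    qed
  qed
qed

lemma ap_in_APs:
  assumes "a < n" "d < n" "L \<le> n div gcd n d"
  shows "{(a + i*d) mod n | i. i < L} \<in> APs n"
  unfolding APs_def using assms by blast

lemma finite_APs: "finite (APs n)"
proof -
  have "APs n \<subseteq> Pow {..<n}" unfolding APs_def by auto
  then show ?thesis by (rule finite_subset) simp
qed

locale colouring_mod_prime_power =
  fixes p k :: nat and f :: "nat \<Rightarrow> int"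
  assumes prime: "prime p" and k_pos: "0 < k"
    and periodic: "\<And>x. f (x mod p^k) = f x"
    and square_eq_1: "\<And>x. f x * f x = 1"
begin

abbreviation "n \<equiv> p^k"

definition corr :: "nat \<Rightarrow> int" where
  "corr t = (\<Sum>x<n. f x * f (x + t))"

definition unit_residues :: "nat set" where
  "unit_residues = {d. d < n \<and> \<not> p dvd d}"

definition unit_corr :: "nat \<Rightarrow> int" where
  "unit_corr t = (\<Sum>d\<in>unit_residues. corr (t*d))"

definition multiples :: "nat \<Rightarrow> nat set" where
  "multiples v = {t. t < n \<and> p^v dvd t}"

definition corr_sum :: "nat \<Rightarrow> int" where
  "corr_sum v = (\<Sum>t\<in>multiples v. corr t)"

definition coset_sum :: "nat \<Rightarrow> nat \<Rightarrow> int" where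
  "coset_sum v c = (\<Sum>y<p^(k-v). f (c + y * p^v))"

definition energy :: "nat \<Rightarrow> int" where
  "energy l = (\<Sum>a<n. \<Sum>d\<in>unit_residues. (\<Sum>i<l. f (a + i*d))^2)"

lemma p_gt_1: "1 < p"
  using prime prime_gt_1_nat by blast

lemma n_pos: "0 < n"
  using p_gt_1 by simp

lemma f_add_n: "f (x + n) = f x"
  by (metis mod_add_self2 periodic)

lemma corr_mod: "corr (t mod n) = corr t"
  unfolding corr_def
proof (intro sum.cong refl)
  fix x
  have "f (x + t mod n) = f ((x + t) mod n)"
    by (metis mod_add_right_eq periodic)
  then show "f x * f (x + t mod n) = f x * f (x + t)" by (simp add: periodic)
qed

lemma corr_0: "corr 0 = int n"
  by (simp add: corr_def square_eq_1)

lemma sum_products_eq_corr: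
  "(\<Sum>a<n. f (a + i*d) * f (a + j*d)) = corr (nat_dist i j * d)"
proof -
  have ordered: "(\<Sum>a<n. f (a + i*d) * f (a + j*d)) = corr ((j-i)*d)" if "i \<le> j" for i j
  proof -
    define g where "g x = f x * f (x + (j-i)*d)" for x
    have g_periodic: "g (x + n) = g x" for x
      using f_add_n[of x] f_add_n[of "x + (j-i)*d"] by (simp add: g_def ac_simps)
    have "i*d + (j-i)*d = j*d" using that by (simp add: add_mult_distrib[symmetric])
    then have "(\<Sum>a<n. f (a + i*d) * f (a + j*d)) = (\<Sum>a<n. g (a + i*d))"
      unfolding g_def by (intro sum.cong refl) (metis add.assoc)
    also have "\<dots> = (\<Sum>a<n. g a)"
      by (rule sum_lessThan_shift_periodic) (rule g_periodic)
    finally show ?thesis by (simp add: g_def corr_def)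
  qed
  show ?thesis
  proof (cases "i \<le> j")
    case True then show ?thesis using ordered by (simp add: nat_dist_def)
  next
    case False then show ?thesis
      using ordered[of j i] by (simp add: nat_dist_def mult.commute)
  qed
qed

lemma energy_eq_sum_unit_corr:
  "energy l = (\<Sum>i<l. \<Sum>j<l. unit_corr (nat_dist i j))"
proof -
  have "energy l = (\<Sum>a<n. \<Sum>d\<in>unit_residues. \<Sum>i<l. \<Sum>j<l. f (a + i*d) * f (a + j*d))"
    by (simp add: energy_def power2_eq_square sum_product)
  also have "\<dots> = (\<Sum>d\<in>unit_residues. \<Sum>i<l. \<Sum>j<l. \<Sum>a<n. f (a + i*d) * f (a + j*d))"
    by (subst sum.swap) (simp add: sum.swap[of _ "{..<n}"])
  also have "\<dots> = (\<Sum>i<l. \<Sum>j<l. unit_corr (nat_dist i j))"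
    by (simp add: sum_products_eq_corr unit_corr_def sum.swap[of _ unit_residues])
  finally show ?thesis .
qed

lemma coprime_if_not_dvd:
  assumes "\<not> p dvd u"
  shows "coprime u n"
proof -
  have "coprime p u" using prime assms by (rule prime_imp_coprime)
  then show ?thesis by (simp add: coprime_commute)
qed

lemma finite_multiples: "finite (multiples v)"
  by (simp add: multiples_def)

lemma multiples_eq_image:
  assumes "v \<le> k"
  shows "multiples v = (\<lambda>y. y * p^v) ` {..<p^(k-v)}"
proof -
  have n_eq: "n = p^(k-v) * p^v" using assms by (simp add: power_add[symmetric])
  have "t \<in> (\<lambda>y. y * p^v) ` {..<p^(k-v)}" if "t < n" "p^v dvd t" for t
  proof -
    obtain y where "t = y * p^v" using \<open>p^v dvd t\<close> by (metis dvd_def mult.commute)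
    moreover have "y < p^(k-v)" using \<open>t < n\<close> calculation n_eq by simp
    ultimately show ?thesis by blast
  qed
  moreover have "y * p^v < n" if "y < p^(k-v)" for y
    using that n_eq p_gt_1 by simp
  ultimately show ?thesis by (auto simp: multiples_def)
qed

lemma card_multiples: "v \<le> k \<Longrightarrow> card (multiples v) = p^(k-v)"
  using p_gt_1 by (simp add: multiples_eq_image card_image inj_on_def)

lemma card_unit_residues: "card unit_residues = p^k - p^(k-1)"
proof -
  have "unit_residues = {..<n} - multiples 1" by (auto simp: unit_residues_def multiples_def)
  moreover have "multiples 1 \<subseteq> {..<n}" by (auto simp: multiples_def)
  ultimately show ?thesis
    using card_multiples[of 1] k_pos by (simp add: card_Diff_subset finite_multiples)
qed

lemma mult_mod_unit_residues:
  assumes "\<not> p dvd u"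
  shows "(\<lambda>d. (u*d) mod n) ` unit_residues \<subseteq> unit_residues"
proof
  fix z assume "z \<in> (\<lambda>d. (u*d) mod n) ` unit_residues"
  then obtain d where d: "d \<in> unit_residues" "z = (u*d) mod n" by auto
  have "\<not> p dvd u*d" using assms d prime by (simp add: unit_residues_def prime_dvd_mult_iff)
  moreover have "p dvd n" using k_pos by simp
  ultimately show "z \<in> unit_residues" using d n_pos by (simp add: unit_residues_def dvd_mod_iff)
qed

lemma mult_mod_multiples:
  assumes "v \<le> k"
  shows "(\<lambda>t. (u*t) mod n) ` multiples v \<subseteq> multiples v"
proof
  fix z assume "z \<in> (\<lambda>t. (u*t) mod n) ` multiples v"
  then obtain t where t: "t \<in> multiples v" "z = (u*t) mod n" by auto
  have "p^v dvd u*t" using t by (simp add: multiples_def)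
  moreover have "p^v dvd n" using assms by (simp add: le_imp_power_dvd)
  ultimately show "z \<in> multiples v" using t n_pos by (simp add: multiples_def dvd_mod_iff)
qed

lemma corr_mult_mod: "corr (t * ((u*d) mod n)) = corr (t*u*d)"
  by (metis corr_mod mod_mult_right_eq mult.assoc)

lemma unit_corr_mult_coprime:
  assumes "\<not> p dvd u"
  shows "unit_corr (t*u) = unit_corr t"
proof -
  have "unit_corr (t*u) = (\<Sum>d\<in>unit_residues. corr (t * ((u*d) mod n)))"
    by (simp add: unit_corr_def corr_mult_mod)
  also have "\<dots> = unit_corr t" unfolding unit_corr_def
    using coprime_if_not_dvd[OF assms] mult_mod_unit_residues[OF assms]
    by (intro sum_mult_mod_reindex) (auto simp: unit_residues_def)
  finally show ?thesis .
qed

lemma unit_corr_eq_prime_power: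
  assumes "p^v dvd t" "\<not> p^Suc v dvd t"
  shows "unit_corr t = unit_corr (p^v)"
proof -
  obtain u where u: "t = p^v * u" using assms(1) by blast
  with assms(2) have "\<not> p dvd u" by auto
  then show ?thesis using u unit_corr_mult_coprime by simp
qed

lemma sum_unit_corr_multiples:
  assumes "v \<le> k"
  shows "(\<Sum>t\<in>multiples v. unit_corr t) = int (card unit_residues) * corr_sum v"
proof -
  have inner: "(\<Sum>t\<in>multiples v. corr (t*d)) = corr_sum v" if "d \<in> unit_residues" for d
  proof -
    have "(\<Sum>t\<in>multiples v. corr (t*d)) = (\<Sum>t\<in>multiples v. corr ((d*t) mod n))"
      by (simp add: corr_mod mult.commute)
    also have "\<dots> = corr_sum v" unfolding corr_sum_def
      using that coprime_if_not_dvd mult_mod_multiples[OF assms]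
      by (intro sum_mult_mod_reindex) (auto simp: unit_residues_def multiples_def finite_multiples)
    finally show ?thesis .
  qed
  have "(\<Sum>t\<in>multiples v. unit_corr t) = (\<Sum>d\<in>unit_residues. \<Sum>t\<in>multiples v. corr (t*d))"
    unfolding unit_corr_def by (rule sum.swap)
  also have "\<dots> = (\<Sum>d\<in>unit_residues. corr_sum v)"
    using inner by (rule sum.cong[OF refl])
  finally show ?thesis by simp
qed

lemma unit_corr_prime_power:
  assumes "v < k"
  shows "unit_corr (p^v) = int (p^v) * (corr_sum v - corr_sum (Suc v))"
proof -
  have sub: "multiples (Suc v) \<subseteq> multiples v"
    by (auto simp: multiples_def intro: dvd_trans[OF le_imp_power_dvd])
  have "(\<Sum>t\<in>multiples v - multiples (Suc v). unit_corr t)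
      = (\<Sum>t\<in>multiples v - multiples (Suc v). unit_corr (p^v))"
  proof (rule sum.cong[OF refl])
    fix t assume "t \<in> multiples v - multiples (Suc v)"
    then show "unit_corr t = unit_corr (p^v)"
      by (intro unit_corr_eq_prime_power) (auto simp: multiples_def)
  qed
  also have "\<dots> = int (card (multiples v - multiples (Suc v))) * unit_corr (p^v)"
    by simp
  also have "card (multiples v - multiples (Suc v)) = p^(k-v) - p^(k - Suc v)"
    using sub assms by (simp add: card_Diff_subset finite_multiples card_multiples)
  finally have diff: "int (card unit_residues) * (corr_sum v - corr_sum (Suc v))
      = int (p^(k-v) - p^(k - Suc v)) * unit_corr (p^v)"
    using sum.subset_diff[OF sub finite_multiples, of unit_corr] assms
      sum_unit_corr_multiples[of v] sum_unit_corr_multiples[of "Suc v"]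
    by (simp add: algebra_simps)
  have card: "card unit_residues = p^v * (p^(k-v) - p^(k - Suc v))"
  proof -
    have "p^k = p^v * p^(k-v)" "p^(k-1) = p^v * p^(k - Suc v)"
      using assms by (simp_all flip: power_add)
    then show ?thesis by (simp only: card_unit_residues diff_mult_distrib2)
  qed
  have "int (p^(k-v) - p^(k - Suc v)) \<noteq> 0"
    using p_gt_1 assms by (simp add: power_strict_increasing)
  moreover have "int (p^(k-v) - p^(k - Suc v)) * (int (p^v) * (corr_sum v - corr_sum (Suc v)))
      = int (p^(k-v) - p^(k - Suc v)) * unit_corr (p^v)"
    using diff unfolding card of_nat_mult by (simp only: ac_simps)
  ultimately show ?thesis by (metis mult_left_cancel)
qed

lemma unit_corr_0: "unit_corr 0 = int (card unit_residues) * int n"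
  by (simp add: unit_corr_def corr_0)

(* For t \<noteq> 0 only the summand v = multiplicity p t survives. *)
lemma unit_corr_eq_telescope:
  assumes "t < p^Suc m"
  shows "unit_corr t = (\<Sum>v\<le>m. unit_corr (p^v) * (of_bool (p^v dvd t) - of_bool (p^Suc v dvd t)))
                       + of_bool (t = 0) * unit_corr 0"
proof (cases "t = 0")
  case False
  define \<mu> where "\<mu> = multiplicity p t"
  have dvd_iff: "p^v dvd t \<longleftrightarrow> v \<le> \<mu>" for v
    using power_dvd_iff_le_multiplicity[OF False] p_gt_1 by (simp add: \<mu>_def)
  have "\<not> p^Suc m dvd t" using assms False by (auto dest: dvd_imp_le)
  then have "\<mu> \<le> m" using dvd_iff by (meson not_less_eq_eq)
  have "(\<Sum>v\<le>m. unit_corr (p^v) * (of_bool (p^v dvd t) - of_bool (p^Suc v dvd t)))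
      = (\<Sum>v\<le>m. if v = \<mu> then unit_corr (p^v) else 0)"
  proof (rule sum.cong[OF refl])
    fix v
    have "of_bool (p^v dvd t) - of_bool (p^Suc v dvd t) = (if v = \<mu> then 1 else 0 :: int)"
      unfolding dvd_iff by auto
    then show "unit_corr (p^v) * (of_bool (p^v dvd t) - of_bool (p^Suc v dvd t))
        = (if v = \<mu> then unit_corr (p^v) else 0)" by simp
  qed
  also have "\<dots> = unit_corr (p^\<mu>)" using \<open>\<mu> \<le> m\<close> by simp
  also have "\<dots> = unit_corr t"
    using dvd_iff[of \<mu>] dvd_iff[of "Suc \<mu>"] by (intro unit_corr_eq_prime_power[symmetric]) auto
  finally show ?thesis using False by simp
qed simp

lemma energy_eq_count_dvd_pairs:
  assumes "l \<le> p^Suc m"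
  shows "energy l = (\<Sum>v\<le>m. unit_corr (p^v) * (count_dvd_pairs (p^v) l - count_dvd_pairs (p^Suc v) l))
                    + int l * unit_corr 0"
proof -
  let ?d = "\<lambda>v i j. of_bool (p^v dvd nat_dist i j) - of_bool (p^Suc v dvd nat_dist i j) :: int"
  have "energy l = (\<Sum>i<l. \<Sum>j<l. (\<Sum>v\<le>m. unit_corr (p^v) * ?d v i j)
                                  + of_bool (nat_dist i j = 0) * unit_corr 0)"
    unfolding energy_eq_sum_unit_corr using assms
    by (intro sum.cong refl unit_corr_eq_telescope) (auto simp: nat_dist_def)
  also have "\<dots> = (\<Sum>v\<le>m. unit_corr (p^v) * (\<Sum>i<l. \<Sum>j<l. ?d v i j))
                   + (\<Sum>i<l. \<Sum>j<l. of_bool (j = i) * unit_corr 0)"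
    by (simp add: sum.distrib sum_distrib_left nat_dist_eq_0_iff eq_commute[of i]
          sum.swap[of _ "{..<l}" "atMost m"])
  also have "\<dots> = (\<Sum>v\<le>m. unit_corr (p^v) * (count_dvd_pairs (p^v) l - count_dvd_pairs (p^Suc v) l))
                   + int l * unit_corr 0"
    by (simp add: count_dvd_pairs_def sum_subtractf)
  finally show ?thesis .
qed

(* Stated after multiplication by p so that it holds uniformly in m: the natural coefficient of
   corr_sum 0 - corr_sum m involves p^(m-1). *)
lemma energy_identity:
  assumes "Suc m \<le> k" "q < p" "l = p^m * q"
  shows "int p * energy l
         = int l * int q * (int p - 1) * int (p^m) * (corr_sum 0 - corr_sum m)
           + int p * int (p^m) * int l * (int q - 1) * (corr_sum m - corr_sum (Suc m))
           + int p * int l * int (card unit_residues) * int n"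
proof -
  have l_le: "l \<le> p^Suc m" using assms(2,3) by simp
  have count: "count_dvd_pairs (p^v) l = int l * int (p^(m-v) * q)" if "v \<le> m" for v
  proof -
    have "l = p^v * (p^(m-v) * q)"
      using assms(3) that by (simp add: mult.assoc[symmetric] flip: power_add)
    then show ?thesis using p_gt_1 count_dvd_pairs_mult[of "p^v" "p^(m-v) * q"] by simp
  qed
  have lower: "int p * (unit_corr (p^v) * (count_dvd_pairs (p^v) l - count_dvd_pairs (p^Suc v) l))
      = int l * int q * (int p - 1) * int (p^m) * (corr_sum v - corr_sum (Suc v))" if "v < m" for v
  proof -
    have "m - v = Suc (m - Suc v)" "m = v + Suc (m - Suc v)" using that by simp_all
    then have "p^(m-v) = p * p^(m - Suc v)" "p^m = p^v * p * p^(m - Suc v)"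
      by (metis power_Suc, metis power_add power_Suc mult.assoc mult.commute)
    then show ?thesis using that assms(1) count[of v] count[of "Suc v"]
      by (simp add: unit_corr_prime_power algebra_simps)
  qed
  have top: "unit_corr (p^m) * (count_dvd_pairs (p^m) l - count_dvd_pairs (p^Suc m) l)
      = int (p^m) * int l * (int q - 1) * (corr_sum m - corr_sum (Suc m))"
    using assms(1) count[of m] count_dvd_pairs_le[OF l_le]
    by (simp add: unit_corr_prime_power algebra_simps)
  let ?T = "\<lambda>v. unit_corr (p^v) * (count_dvd_pairs (p^v) l - count_dvd_pairs (p^Suc v) l)"
  have "int p * (\<Sum>v<m. ?T v)
      = (\<Sum>v<m. int l * int q * (int p - 1) * int (p^m) * (corr_sum v - corr_sum (Suc v)))"
    unfolding sum_distrib_left by (intro sum.cong refl lower) simp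
  also have "\<dots> = int l * int q * (int p - 1) * int (p^m) * (corr_sum 0 - corr_sum m)"
    by (simp add: sum_distrib_left[symmetric] sum_lessThan_telescope')
  finally have low_sum: "int p * (\<Sum>v<m. ?T v)
      = int l * int q * (int p - 1) * int (p^m) * (corr_sum 0 - corr_sum m)" .
  have "(\<Sum>v\<le>m. ?T v) = (\<Sum>v<m. ?T v) + ?T m"
    by (simp only: lessThan_Suc_atMost[symmetric] sum.lessThan_Suc)
  then have "int p * energy l = int p * (\<Sum>v<m. ?T v) + int p * ?T m + int p * (int l * unit_corr 0)"
    by (simp only: energy_eq_count_dvd_pairs[OF l_le] distrib_left)
  then show ?thesis unfolding low_sum top unit_corr_0 by (simp add: algebra_simps)
qed

lemma coset_sum_split:
  assumes "v < k"
  shows "coset_sum v c = (\<Sum>r<p. coset_sum (Suc v) (c + p^v * r))"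
proof -
  have "p^(k-v) = p * p^(k - Suc v)" using assms by (metis Suc_diff_Suc power_Suc)
  then have "coset_sum v c = (\<Sum>z<p^(k - Suc v). \<Sum>r<p. f (c + (r + p*z) * p^v))"
    by (simp add: coset_sum_def sum_lessThan_mult_split)
  also have "\<dots> = (\<Sum>r<p. coset_sum (Suc v) (c + p^v * r))"
    unfolding coset_sum_def by (subst sum.swap) (simp add: algebra_simps)
  finally show ?thesis .
qed

lemma coset_sum_add_multiple:
  assumes "v \<le> k"
  shows "coset_sum v (c + p^v * z) = coset_sum v c"
proof -
  define g where "g y = f (c + y * p^v)" for y
  have "p^(k-v) * p^v = n" using assms by (simp flip: power_add)
  then have "g (y + p^(k-v)) = g y" for y
    using f_add_n[of "c + y * p^v"] by (simp add: g_def algebra_simps)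
  then have "(\<Sum>y<p^(k-v). g (y + z)) = (\<Sum>y<p^(k-v). g y)"
    by (rule sum_lessThan_shift_periodic)
  then show ?thesis by (simp add: coset_sum_def g_def algebra_simps)
qed

lemma corr_sum_eq_sum_squares:
  assumes "v \<le> k"
  shows "corr_sum v = (\<Sum>c<p^v. (coset_sum v c)^2)"
proof -
  have inj: "inj_on (\<lambda>y. y * p^v) {..<p^(k-v)}" using p_gt_1 by (auto simp: inj_on_def)
  have n_eq: "n = p^v * p^(k-v)" using assms by (simp flip: power_add)
  have "corr_sum v = (\<Sum>y<p^(k-v). \<Sum>x<n. f x * f (x + y * p^v))"
    by (simp add: corr_sum_def multiples_eq_image[OF assms] sum.reindex[OF inj] corr_def)
  also have "\<dots> = (\<Sum>x<p^v * p^(k-v). f x * coset_sum v x)"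
    by (subst sum.swap) (simp add: coset_sum_def sum_distrib_left n_eq)
  also have "\<dots> = (\<Sum>z<p^(k-v). \<Sum>c<p^v. f (c + p^v*z) * coset_sum v c)"
    by (simp add: sum_lessThan_mult_split coset_sum_add_multiple[OF assms])
  also have "\<dots> = (\<Sum>c<p^v. coset_sum v c * coset_sum v c)"
    by (subst sum.swap) (simp add: coset_sum_def sum_distrib_right mult.commute)
  finally show ?thesis by (simp add: power2_eq_square)
qed

lemma corr_sum_k: "corr_sum k = int n"
  using corr_sum_eq_sum_squares[of k] by (simp add: coset_sum_def power2_eq_square square_eq_1)

lemma corr_sum_nonneg: "v \<le> k \<Longrightarrow> 0 \<le> corr_sum v"
  by (simp add: corr_sum_eq_sum_squares sum_nonneg)

lemma corr_sum_le_mult_next: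
  assumes "v < k"
  shows "corr_sum v \<le> int p * corr_sum (Suc v)"
proof -
  have "corr_sum v = (\<Sum>c<p^v. (\<Sum>r<p. coset_sum (Suc v) (c + p^v * r))^2)"
    using assms by (simp add: corr_sum_eq_sum_squares coset_sum_split)
  also have "\<dots> \<le> (\<Sum>c<p^v. int p * (\<Sum>r<p. (coset_sum (Suc v) (c + p^v * r))^2))"
    by (intro sum_mono) (use square_sum_le_card_sum_squares[of _ "{..<p}"] in simp)
  also have "\<dots> = int p * (\<Sum>c<p^v * p. (coset_sum (Suc v) c)^2)"
    by (simp add: sum_distrib_left sum.swap[of _ "{..<p}"] sum_lessThan_mult_split)
  also have "\<dots> = int p * corr_sum (Suc v)"
    using assms by (simp add: corr_sum_eq_sum_squares mult.commute)
  finally show ?thesis .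
qed

lemma corr_sum_le:
  assumes "v \<le> k"
  shows "corr_sum v \<le> int (p^(k-v)) * int n"
proof -
  have "corr_sum v \<le> int (p^d) * int n" if "v + d = k" for d
    using that
  proof (induction d arbitrary: v)
    case 0 then show ?case by (simp add: corr_sum_k)
  next
    case (Suc d)
    then have "corr_sum (Suc v) \<le> int (p^d) * int n" by simp
    moreover have "corr_sum v \<le> int p * corr_sum (Suc v)"
      using Suc.prems by (intro corr_sum_le_mult_next) simp
    ultimately have "corr_sum v \<le> int p * (int (p^d) * int n)"
      by (meson order_trans mult_left_mono of_nat_0_le_iff)
    then show ?case by (simp add: mult.assoc)
  qed
  then show ?thesis using assms by simp
qed

end

lemma half_split_quadratic_le:
  fixes P :: int
  assumes "2 \<le> P"
  shows "P*(P-1) + (P div 2)*(P - P div 2) \<le> 16*((P div 2)*(P - P div 2))"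
proof -
  define Q where "Q = P div 2"
  have "P = 2*Q \<or> P = 2*Q + 1" "1 \<le> Q" using assms unfolding Q_def by presburger+
  moreover have "0 \<le> Q*Q" by simp
  ultimately show ?thesis unfolding Q_def[symmetric] by (auto simp: algebra_simps)
qed

(* z, x, y play the roles of corr_sum 0, corr_sum m, corr_sum (Suc m); T is the energy,
   X = p^m, E = p^(k-1), U = phi(n) and N = n. *)
lemma energy_bound_arith:
  fixes P Q X E L U N d T z x y :: int
  assumes pos: "0 < Q" "Q < P" "0 < X" "0 < E" "0 \<le> d"
    and L: "L = X*Q" and U: "U = E*(P-1)" and N: "N = P*E"
    and identity: "P * T = L*Q*(P-1)*X*(z - x) + P*X*L*(Q-1)*(x - y) + P*L*U*N"
    and upper: "T \<le> N*U*d"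
    and bounds: "0 \<le> z" "x \<le> X*d" "X*y \<le> E*N"
    and cube: "X^3 \<le> P*E^2"
    and choice: "P*(P-1) + Q*(P-Q) \<le> 16*(Q*(P-Q))"
  shows "P*X \<le> 16*d"
proof -
  define inner where "inner = Q*(P-1)*X*z - X*(P-Q)*x - P*(Q-1)*(X*y) + P*(E*(P-1))*(P*E)"
  have PT: "P * T = X*Q*inner"
    unfolding identity inner_def L U N by (simp add: algebra_simps)
  have "0 \<le> Q*(P-1)*X*z" using pos bounds by simp
  moreover have "X*(P-Q)*x \<le> X*(P-Q)*(X*d)" using pos bounds by (intro mult_left_mono) auto
  moreover have "P*(Q-1)*(X*y) \<le> P*(Q-1)*(E*(P*E))"
    using pos bounds unfolding N by (intro mult_left_mono) auto
  ultimately have "(P-Q)*(P*E*(P*E) - X*X*d) \<le> inner"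
    unfolding inner_def by (simp add: algebra_simps)
  then have "X*Q*((P-Q)*(P*E*(P*E) - X*X*d)) \<le> P * T"
    unfolding PT using pos by (intro mult_left_mono) auto
  also have "\<dots> \<le> P*((P*E)*(E*(P-1))*d)"
    using upper pos unfolding U N by (intro mult_left_mono) auto
  finally have "X*Q*(P-Q)*(P*E*(P*E)) \<le> P*(P*E)*(E*(P-1))*d + Q*(P-Q)*d*X^3"
    by (simp add: algebra_simps power3_eq_cube)
  also have "Q*(P-Q)*d*X^3 \<le> Q*(P-Q)*d*(P*E^2)"
    using cube pos by (intro mult_left_mono) auto
  finally have "(P*E^2) * (Q*(P-Q)*(P*X)) \<le> (P*E^2) * ((P*(P-1) + Q*(P-Q))*d)"
    by (simp add: algebra_simps power2_eq_square)
  then have "Q*(P-Q)*(P*X) \<le> (P*(P-1) + Q*(P-Q))*d"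
    using pos by (simp add: mult_le_cancel_left_pos)
  also have "\<dots> \<le> (16*(Q*(P-Q)))*d" using choice pos by (intro mult_right_mono) auto
  finally have "(Q*(P-Q))*(P*X) \<le> (Q*(P-Q))*(16*d)" by (simp add: algebra_simps)
  then show ?thesis using pos by (simp add: mult_le_cancel_left_pos)
qed

locale ap_bounded_colouring = colouring_mod_prime_power +
  fixes D :: int
  assumes ap_sum_bound: "\<And>a d L. a < p^k \<Longrightarrow> d < p^k \<Longrightarrow> L \<le> p^k div gcd (p^k) d
                           \<Longrightarrow> \<bar>\<Sum>i<L. f (a + i*d)\<bar> \<le> D"
begin

lemma D_nonneg: "0 \<le> D"
  using ap_sum_bound[of 0 0 0] n_pos by simp

lemma square_le_D_squared: "\<bar>s\<bar> \<le> D \<Longrightarrow> s^2 \<le> D^2"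
  using D_nonneg by (metis abs_le_square_iff abs_of_nonneg)

lemma corr_sum_le_D_squared:
  assumes "v < k"
  shows "corr_sum v \<le> int (p^v) * D^2"
proof -
  have "p^v < n" using assms p_gt_1 by (simp add: power_strict_increasing)
  moreover have "gcd n (p^v) = p^v" using assms by (simp add: gcd_nat.absorb2 le_imp_power_dvd)
  then have "p^(k-v) \<le> n div gcd n (p^v)" using assms p_gt_1 by (simp add: power_diff)
  ultimately have bound: "(coset_sum v c)^2 \<le> D^2" if "c < p^v" for c
    unfolding coset_sum_def using that
    by (intro square_le_D_squared ap_sum_bound) (auto simp: mult.commute)
  have "corr_sum v = (\<Sum>c<p^v. (coset_sum v c)^2)"
    using assms by (simp add: corr_sum_eq_sum_squares)
  also have "\<dots> \<le> (\<Sum>c<p^v. D^2)" by (rule sum_mono) (simp add: bound)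
  finally show ?thesis by simp
qed

lemma energy_le:
  assumes "l \<le> n"
  shows "energy l \<le> int n * int (card unit_residues) * D^2"
proof -
  have "(\<Sum>i<l. f (a + i*d))^2 \<le> D^2" if "a < n" "d \<in> unit_residues" for a d
  proof -
    have "coprime d n" using that coprime_if_not_dvd by (simp add: unit_residues_def)
    then have "gcd n d = 1" by (simp add: coprime_commute)
    then show ?thesis
      using that assms by (intro square_le_D_squared ap_sum_bound) (auto simp: unit_residues_def)
  qed
  then have "energy l \<le> (\<Sum>a<n. \<Sum>d\<in>unit_residues. D^2)"
    unfolding energy_def by (intro sum_mono) auto
  then show ?thesis by simp
qed

lemma prime_power_le_16_D_squared:
  assumes "Suc m \<le> k" "3*m + 1 \<le> 2*k"
  shows "int (p^Suc m) \<le> 16 * D^2"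
proof -
  define q where "q = p div 2"
  define l where "l = p^m * q"
  have "2 \<le> p" using p_gt_1 by simp
  then have q: "0 < q" "q < p" by (auto simp: q_def)
  have "l \<le> p^Suc m" using q by (simp add: l_def)
  also have "\<dots> \<le> n" using assms(1) p_gt_1 by (intro power_increasing) auto
  finally have l_le: "l \<le> n" .
  have k_eq: "k = Suc (k-1)" using k_pos by simp
  have n_eq: "int n = int p * int (p^(k-1))"
    by (subst k_eq) simp
  have card_eq: "int (card unit_residues) = int (p^(k-1)) * (int p - 1)"
  proof -
    have "p^(k-1) \<le> n" using p_gt_1 by (simp add: power_increasing)
    then show ?thesis using n_eq by (simp add: card_unit_residues of_nat_diff algebra_simps)
  qed
  have "int (p^m) * corr_sum (Suc m) \<le> int (p^m) * (int (p^(k - Suc m)) * int n)"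
    using corr_sum_le[OF assms(1)] by (intro mult_left_mono) auto
  also have "\<dots> = int (p^(k-1)) * int n"
    using assms(1) by (simp flip: power_add add: mult.assoc[symmetric])
  finally have next_bound: "int (p^m) * corr_sum (Suc m) \<le> int (p^(k-1)) * int n" .
  have "p^(3*m) \<le> p^(Suc (2*(k-1)))" using assms(2) p_gt_1 by (intro power_increasing) auto
  then have "(p^m)^3 \<le> p * (p^(k-1))^2"
    by (simp flip: power_mult add: mult.commute)
  then have cube: "int (p^m)^3 \<le> int p * int (p^(k-1))^2"
    by (metis of_nat_le_iff of_nat_mult of_nat_power)
  have choice: "int p*(int p-1) + int q*(int p-int q) \<le> 16*(int q*(int p-int q))"
    using half_split_quadratic_le[of "int p"] \<open>2 \<le> p\<close> by (simp add: q_def zdiv_int)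
  have "int p * int (p^m) \<le> 16 * D^2"
  proof (rule energy_bound_arith)
    show "int p * energy l
        = int l * int q * (int p - 1) * int (p^m) * (corr_sum 0 - corr_sum m)
          + int p * int (p^m) * int l * (int q - 1) * (corr_sum m - corr_sum (Suc m))
          + int p * int l * int (card unit_residues) * int n"
      using assms(1) q(2) l_def by (rule energy_identity)
  qed (use q D_nonneg l_le energy_le corr_sum_nonneg corr_sum_le_D_squared assms(1)
         next_bound cube choice card_eq n_eq p_gt_1 l_def in auto)
  then show ?thesis by simp
qed

end

lemma disc_AP_attained:
  "\<exists>\<chi>\<in>{0..<n} \<rightarrow>\<^sub>E {1, -1::int}. disc_AP n = Max {\<bar>\<Sum>x\<in>A. \<chi> x\<bar> | A. A \<in> APs n}"
proof -
  let ?M = "\<lambda>\<chi>. Max {\<bar>\<Sum>x\<in>A. \<chi> x\<bar> | A. A \<in> APs n}"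
  let ?C = "{0..<n} \<rightarrow>\<^sub>E {1, -1::int}"
  have "disc_AP n = Min (?M ` ?C)"
    unfolding disc_AP_def by (simp add: Setcompr_eq_image)
  moreover have "Min (?M ` ?C) \<in> ?M ` ?C"
    by (intro Min_in) (auto simp: finite_PiE PiE_eq_empty_iff)
  ultimately show ?thesis by auto
qed

lemma abs_sum_le_Max_APs:
  assumes "A \<in> APs n"
  shows "\<bar>\<Sum>x\<in>A. \<chi> x\<bar> \<le> Max {\<bar>\<Sum>x\<in>A. \<chi> x\<bar> | A. A \<in> APs n}"
  using assms finite_APs by (intro Max_ge) (auto simp: Setcompr_eq_image)

lemma disc_AP_nonneg:
  assumes "0 < n"
  shows "0 \<le> disc_AP n"
proof -
  obtain \<chi> where "disc_AP n = Max {\<bar>\<Sum>x\<in>A. \<chi> x\<bar> | A. A \<in> APs n}"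
    using disc_AP_attained by blast
  moreover have "{} \<in> APs n"
    using ap_in_APs[of 0 n 0 0] assms by simp
  ultimately show ?thesis
    using abs_sum_le_Max_APs[of "{}" n \<chi>] by simp
qed

lemma disc_AP_prime_power_bound:
  assumes "prime p" "Suc m \<le> k" "3*m + 1 \<le> 2*k"
  shows "int (p^Suc m) \<le> 16 * disc_AP (p^k)^2"
proof -
  let ?n = "p^k"
  obtain \<chi> where \<chi>: "\<chi> \<in> {0..<?n} \<rightarrow>\<^sub>E {1, -1}"
    and disc: "disc_AP ?n = Max {\<bar>\<Sum>x\<in>A. \<chi> x\<bar> | A. A \<in> APs ?n}"
    using disc_AP_attained by blast
  define f where "f x = \<chi> (x mod ?n)" for x
  have n_pos: "0 < ?n" using assms(1) prime_gt_0_nat by simp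
  interpret ap_bounded_colouring p k f "disc_AP ?n"
  proof
    show "prime p" "0 < k" using assms by auto
    show "f (x mod ?n) = f x" for x by (simp add: f_def)
    show "f x * f x = 1" for x
    proof -
      have "x mod ?n \<in> {0..<?n}" using n_pos by simp
      then have "\<chi> (x mod ?n) \<in> {1, -1}" using \<chi> by (auto simp: PiE_iff)
      then show ?thesis by (auto simp: f_def)
    qed
    fix a d L assume "a < ?n" "d < ?n" and L: "L \<le> ?n div gcd ?n d"
    then have "{(a + i*d) mod ?n | i. i < L} \<in> APs ?n" by (rule ap_in_APs)
    moreover have "{(a + i*d) mod ?n | i. i < L} = (\<lambda>i. (a + i*d) mod ?n) ` {..<L}" by auto
    ultimately have "\<bar>\<Sum>x\<in>(\<lambda>i. (a + i*d) mod ?n) ` {..<L}. \<chi> x\<bar> \<le> disc_AP ?n"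
      unfolding disc by (simp only: abs_sum_le_Max_APs)
    moreover have "(\<Sum>x\<in>(\<lambda>i. (a + i*d) mod ?n) ` {..<L}. \<chi> x) = (\<Sum>i<L. f (a + i*d))"
      using inj_on_ap_mod[OF n_pos L] by (simp add: sum.reindex f_def)
    ultimately show "\<bar>\<Sum>i<L. f (a + i*d)\<bar> \<le> disc_AP ?n" by simp
  qed
  show ?thesis by (rule prime_power_le_16_D_squared[OF assms(2,3)])
qed

theorem corollary4p9:
  fixes p k :: nat
  assumes "prime p" and "k > 0"
  shows "real_of_int (disc_AP (p ^ k))
           \<ge> 1/4 * real p powr (real (k - k div 3) / 2)"
proof -
  define e where "e = k - k div 3"
  define D where "D = disc_AP (p^k)"
  have "Suc (e - 1) = e" "3*(e - 1) + 1 \<le> 2*k"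
    using assms(2) unfolding e_def by presburger+
  moreover have "e \<le> k" by (simp add: e_def)
  ultimately have "int (p^e) \<le> 16 * D^2"
    using disc_AP_prime_power_bound[OF assms(1), of "e - 1" k] by (simp add: D_def)
  then have "real_of_int (int (p^e)) \<le> real_of_int (16 * D^2)"
    by (simp only: of_int_le_iff)
  then have "real (p^e) \<le> (4 * real_of_int D)^2"
    by (simp add: power_mult_distrib)
  moreover have "0 \<le> D"
    unfolding D_def using assms(1) prime_gt_0_nat by (intro disc_AP_nonneg) simp
  ultimately have "sqrt (real (p^e)) \<le> 4 * real_of_int D"
    by (intro real_le_lsqrt) simp_all
  moreover have "real p powr (real e / 2) = sqrt (real (p^e))"
  proof -
    have "real p powr (real e / 2) = (real p powr real e) powr (1/2)" by (simp add: powr_powr)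
    also have "real p powr real e = real (p^e)"
      using prime_gt_0_nat[OF assms(1)] by (simp add: powr_realpow)
    finally show ?thesis by (simp add: powr_half_sqrt)
  qed
  ultimately show ?thesis unfolding e_def D_def by simp
qed

end
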